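(* For any sequence of points $u\in U$ converging to a vertex $p_i$, after passing to a subsequence, either $|\nabla\varphi(u)|\to\infty$ or $\nabla\varphi(u)$ converges to a point of $\partial C_{p_i}$.
   Context: $n\ge3$; $p_1,\dots,p_n\in\mathbb{R}^2_{(u_1,u_2)}$ are distinct vertices, in counterclockwise order, of a convex polygon with interior $U$; indices mod $n$. $A\ge0$, $V(u)=A+\sum_i\frac{1}{2|u-p_i|}$. For $b_1,\dots,b_n\in\mathbb{R}$, $\varphi:\overline U\to\mathbb{R}$ is the unique continuous convex function, smooth in $U$, with $\det D^2\varphi=V$ in $U$, $\varphi(p_i)=b_i$, and $\varphi$ affine linear on each edge $[p_i,p_{i+1}]$. The subgradient set at a vertex is $C_{p_i}=\{y\in\mathbb{R}^2:\varphi(u)-\varphi(p_i)\ge\langle y,u-p_i\rangle\ \forall u\in\overline U\}$. *)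

theory Defs
  imports "HOL-Analysis.Analysis"
begin

definition cross2 :: "real^2 \<Rightarrow> real^2 \<Rightarrow> real" where
  "cross2 a b = a$1 * b$2 - a$2 * b$1"

text \<open>p 0, ..., p (n-1) are distinct vertices, in counterclockwise order, of a convex
  polygon: every other vertex lies strictly to the left of each directed edge
  p i -> p ((i+1) mod n).\<close>
definition ccw_convex_polygon :: "nat \<Rightarrow> (nat \<Rightarrow> real^2) \<Rightarrow> bool" where
  "ccw_convex_polygon n p \<longleftrightarrow> 3 \<le> n \<and> inj_on p {..<n} \<and>
     (\<forall>i<n. \<forall>j<n. j \<noteq> i \<and> j \<noteq> (i + 1) mod n \<longrightarrow>
        cross2 (p ((i + 1) mod n) - p i) (p j - p i) > 0)"

definition polygon_interior :: "nat \<Rightarrow> (nat \<Rightarrow> real^2) \<Rightarrow> (real^2) set" where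
  "polygon_interior n p = interior (convex hull (p ` {..<n}))"

definition potential :: "real \<Rightarrow> nat \<Rightarrow> (nat \<Rightarrow> real^2) \<Rightarrow> real^2 \<Rightarrow> real" where
  "potential A n p u = A + (\<Sum>i<n. 1 / (2 * norm (u - p i)))"

definition partial :: "(real^'n \<Rightarrow> real) \<Rightarrow> 'n \<Rightarrow> real^'n \<Rightarrow> real" where
  "partial f j u = frechet_derivative f (at u) (axis j 1)"

definition grad :: "(real^'n \<Rightarrow> real) \<Rightarrow> real^'n \<Rightarrow> real^'n" where
  "grad f u = (\<chi> j. partial f j u)"

definition hessian :: "(real^'n \<Rightarrow> real) \<Rightarrow> real^'n \<Rightarrow> real^'n^'n" where
  "hessian f u = (\<chi> i j. partial (\<lambda>v. partial f i v) j u)"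

fun iter_partial :: "'n list \<Rightarrow> (real^'n \<Rightarrow> real) \<Rightarrow> real^'n \<Rightarrow> real" where
  "iter_partial [] f = f"
| "iter_partial (j # js) f = partial (iter_partial js f) j"

definition smooth_on :: "(real^'n) set \<Rightarrow> (real^'n \<Rightarrow> real) \<Rightarrow> bool" where
  "smooth_on S f \<longleftrightarrow> (\<forall>js. (\<forall>u\<in>S. iter_partial js f differentiable (at u)))"

definition subgrad_set :: "(real^2) set \<Rightarrow> (real^2 \<Rightarrow> real) \<Rightarrow> real^2 \<Rightarrow> (real^2) set" where
  "subgrad_set K f q = {y. \<forall>u\<in>K. f u - f q \<ge> y \<bullet> (u - q)}"

end

theory Submission
  imports Defs
begin

text \<open>At a point u of the open polygon the gradient of the convex function \<phi> is a
  subgradient of \<phi> at u, so every z \<in> C_p satisfies z \<bullet> (u - p) \<le> \<phi> u - \<phi> p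
  \<le> \<nabla>\<phi>(u) \<bullet> (u - p). Passing to the limit u \<rightarrow> p shows that bounded limits of
  \<nabla>\<phi>(u) lie in C_p. If such a limit y were interior, some ball of radius e around y
  would lie in C_p; testing with z = y + e (u - p)/|u - p| gives |\<nabla>\<phi>(u) - y| \<ge> e
  for all u \<noteq> p, which is incompatible with convergence. The vertex p is on the boundary
  of the polygon, so u \<noteq> p. Finally, a sequence whose norm does not tend to \<infinity> has a
  bounded, hence convergent, subsequence. Only convexity, continuity and interior
  differentiability of \<phi> enter.\<close>

lemma convex_on_has_derivative_imp_above_tangent:
  fixes f :: "'a::real_normed_vector \<Rightarrow> real"
  assumes convex: "convex_on S f" and u: "u \<in> S" and w: "w \<in> S"
    and deriv: "(f has_derivative D) (at u)"
  shows "D (w - u) \<le> f w - f u"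
proof -
  define h where "h t = f (u + t *\<^sub>R (w - u))" for t :: real
  have "((\<lambda>t. u + t *\<^sub>R (w - u)) has_derivative (\<lambda>t. t *\<^sub>R (w - u))) (at 0)"
    by (auto intro!: derivative_eq_intros)
  moreover have "(f has_derivative D) (at (u + 0 *\<^sub>R (w - u)))"
    using deriv by simp
  ultimately have "(h has_derivative (\<lambda>t. D (t *\<^sub>R (w - u)))) (at 0)"
    unfolding h_def by (rule has_derivative_compose[of _ _ _ _ f])
  moreover have "linear D"
    using deriv has_derivative_linear by blast
  ultimately have "(h has_derivative (\<lambda>t. t * D (w - u))) (at 0)"
    by (simp add: linear_scale)
  hence "(h has_field_derivative D (w - u)) (at 0)"
    unfolding has_field_derivative_def by (simp add: mult.commute[of _ "D (w - u)"])
  hence lim: "((\<lambda>t. (h t - h 0) / t) \<longlongrightarrow> D (w - u)) (at_right 0)"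
    unfolding has_field_derivative_iff by (auto intro: tendsto_mono at_le)
  have "eventually (\<lambda>t. t \<in> {0<..<1::real}) (at_right 0)"
    using eventually_at_right_real[of 0 1] by simp
  hence "eventually (\<lambda>t. (h t - h 0) / t \<le> f w - f u) (at_right 0)"
  proof eventually_elim
    case (elim t)
    have "f ((1 - t) *\<^sub>R u + t *\<^sub>R w) \<le> (1 - t) * f u + t * f w"
      using convex_onD[OF convex, of t u w] elim u w by auto
    moreover have "(1 - t) *\<^sub>R u + t *\<^sub>R w = u + t *\<^sub>R (w - u)"
      by (simp add: algebra_simps)
    ultimately have "h t - h 0 \<le> t * (f w - f u)"
      unfolding h_def by (simp add: algebra_simps)
    thus ?case
      using elim by (simp add: divide_le_eq mult.commute)
  qed
  thus ?thesis
    using tendsto_upperbound[OF lim] trivial_limit_at_right_real by simp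
qed

lemma inner_grad_eq_frechet_derivative:
  fixes f :: "real^'n \<Rightarrow> real"
  assumes "f differentiable (at u)"
  shows "grad f u \<bullet> v = frechet_derivative f (at u) v"
proof -
  let ?D = "frechet_derivative f (at u)"
  have "linear ?D"
    using assms frechet_derivative_works has_derivative_linear by blast
  have "v = (\<Sum>j\<in>UNIV. (v$j) *\<^sub>R axis j 1)"
    by (simp add: vec_eq_iff axis_def if_distrib cong: if_cong)
  hence "?D v = ?D (\<Sum>j\<in>UNIV. (v$j) *\<^sub>R axis j 1)"
    by simp
  also have "\<dots> = (\<Sum>j\<in>UNIV. v$j * ?D (axis j 1))"
    using \<open>linear ?D\<close> by (simp add: linear_sum linear_scale)
  finally show ?thesis
    by (simp add: inner_vec_def grad_def partial_def mult.commute)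
qed

lemma convex_on_grad_above_tangent:
  fixes f :: "real^'n \<Rightarrow> real"
  assumes "convex_on S f" "u \<in> S" "w \<in> S" "f differentiable (at u)"
  shows "grad f u \<bullet> (w - u) \<le> f w - f u"
  using convex_on_has_derivative_imp_above_tangent[OF assms(1-3)] assms(4)
  by (simp add: inner_grad_eq_frechet_derivative frechet_derivative_works)

lemma cross2_eq_inner: "cross2 d w = vector [- d$2, d$1] \<bullet> w"
  by (simp add: cross2_def inner_vec_def sum_2 algebra_simps)

lemma vector_perp_eq_0_iff:
  fixes d :: "real^2"
  shows "vector [- d$2, d$1] = (0 :: real^2) \<longleftrightarrow> d = 0"
  by (auto simp: vec_eq_iff forall_2)

lemma ccw_convex_polygon_next_vertex_neq:
  assumes "ccw_convex_polygon n p" "i < n"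
  shows "p ((i + 1) mod n) \<noteq> p i"
proof -
  have "3 \<le> n" "inj_on p {..<n}"
    using assms(1) unfolding ccw_convex_polygon_def by auto
  moreover have "(i + 1) mod n < n"
    using \<open>3 \<le> n\<close> by simp
  moreover have "(i + 1) mod n \<noteq> i"
    using \<open>3 \<le> n\<close> assms(2) by (cases "i + 1 = n") auto
  ultimately show ?thesis
    using assms(2) by (metis inj_on_eq_iff lessThan_iff)
qed

lemma ccw_convex_polygon_left_of_edge:
  assumes "ccw_convex_polygon n p" "i < n" "k < n"
  shows "cross2 (p ((i + 1) mod n) - p i) (p k - p i) \<ge> 0"
proof (cases "k = i \<or> k = (i + 1) mod n")
  case True
  thus ?thesis
    by (auto simp: cross2_def)
next
  case False
  hence "cross2 (p ((i + 1) mod n) - p i) (p k - p i) > 0"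
    using assms unfolding ccw_convex_polygon_def by blast
  thus ?thesis
    by simp
qed

lemma vertex_notin_polygon_interior:
  assumes "ccw_convex_polygon n p" "i < n"
  shows "p i \<notin> polygon_interior n p"
proof
  assume "p i \<in> polygon_interior n p"
  define d where "d = p ((i + 1) mod n) - p i"
  define a :: "real^2" where "a = vector [- d$2, d$1]"
  have "a \<noteq> 0"
    using ccw_convex_polygon_next_vertex_neq[OF assms]
    unfolding a_def d_def vector_perp_eq_0_iff by simp
  have "p ` {..<n} \<subseteq> {x. a \<bullet> x \<ge> a \<bullet> p i}"
    using ccw_convex_polygon_left_of_edge[OF assms]
    by (auto simp: a_def d_def cross2_eq_inner inner_diff_right)
  hence "convex hull (p ` {..<n}) \<subseteq> {x. a \<bullet> x \<ge> a \<bullet> p i}"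
    by (intro hull_minimal convex_halfspace_ge)
  hence "polygon_interior n p \<subseteq> interior {x. a \<bullet> x \<ge> a \<bullet> p i}"
    unfolding polygon_interior_def by (rule interior_mono)
  also have "\<dots> = {x. a \<bullet> x > a \<bullet> p i}"
    using \<open>a \<noteq> 0\<close> by (rule interior_halfspace_ge)
  finally show False
    using \<open>p i \<in> polygon_interior n p\<close> by blast
qed

lemma subgrad_set_inner_le_grad:
  assumes "convex_on K f" "z \<in> subgrad_set K f q" "q \<in> K" "u \<in> K" "f differentiable (at u)"
  shows "z \<bullet> (u - q) \<le> grad f u \<bullet> (u - q)"
proof -
  have "z \<bullet> (u - q) \<le> f u - f q"
    using assms(2,4) unfolding subgrad_set_def by blast
  moreover have "grad f u \<bullet> (q - u) \<le> f q - f u"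
    using convex_on_grad_above_tangent assms(1,3-5) by blast
  ultimately show ?thesis
    by (simp add: inner_diff_right)
qed

lemma cball_subset_subgrad_set_imp_norm_grad_diff_ge:
  assumes convex: "convex_on K f" and ball: "cball y e \<subseteq> subgrad_set K f q" and "0 \<le> e"
    and "q \<in> K" "u \<in> K" "u \<noteq> q" "f differentiable (at u)"
  shows "e \<le> norm (grad f u - y)"
proof -
  define d where "d = u - q"
  have "norm d > 0"
    using \<open>u \<noteq> q\<close> unfolding d_def by simp
  define z where "z = y + (e / norm d) *\<^sub>R d"
  have "z \<in> subgrad_set K f q"
    using ball \<open>0 \<le> e\<close> \<open>norm d > 0\<close> unfolding z_def by (auto simp: dist_norm)
  hence "z \<bullet> d \<le> grad f u \<bullet> d"
    using subgrad_set_inner_le_grad assms(1,4-) unfolding d_def by blast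
  moreover have "z \<bullet> d = y \<bullet> d + e * norm d"
    using \<open>norm d > 0\<close> unfolding z_def
    by (simp add: inner_add_left power2_norm_eq_inner[symmetric] power2_eq_square)
  ultimately have "e * norm d \<le> (grad f u - y) \<bullet> d"
    by (simp add: inner_diff_left)
  also have "\<dots> \<le> norm (grad f u - y) * norm d"
    by (rule norm_cauchy_schwarz)
  finally show ?thesis
    using \<open>norm d > 0\<close> by simp
qed

lemma tendsto_grad_in_subgrad_set:
  assumes convex: "convex_on K f" and cont: "continuous_on K f" and "q \<in> K"
    and s: "\<And>k. s k \<in> K" "\<And>k. f differentiable (at (s k))" "s \<longlonglongrightarrow> q"
    and lim: "(\<lambda>k. grad f (s k)) \<longlonglongrightarrow> y"
  shows "y \<in> subgrad_set K f q"
  unfolding subgrad_set_def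
proof clarify
  fix w assume "w \<in> K"
  have "(\<lambda>k. f (s k)) \<longlonglongrightarrow> f q"
    using continuous_on_tendsto_compose[OF cont s(3) \<open>q \<in> K\<close>] s(1) by simp
  hence "(\<lambda>k. f w - f (s k)) \<longlonglongrightarrow> f w - f q"
    by (intro tendsto_intros)
  moreover have "(\<lambda>k. grad f (s k) \<bullet> (w - s k)) \<longlonglongrightarrow> y \<bullet> (w - q)"
    by (intro tendsto_intros lim s(3))
  moreover have "grad f (s k) \<bullet> (w - s k) \<le> f w - f (s k)" for k
    using convex_on_grad_above_tangent[OF convex s(1) \<open>w \<in> K\<close> s(2)] .
  ultimately show "y \<bullet> (w - q) \<le> f w - f q"
    by (intro LIMSEQ_le) auto
qed

lemma tendsto_grad_in_frontier_subgrad_set: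
  assumes convex: "convex_on K f" and cont: "continuous_on K f" and "q \<in> K"
    and s: "\<And>k. s k \<in> K" "\<And>k. s k \<noteq> q" "\<And>k. f differentiable (at (s k))" "s \<longlonglongrightarrow> q"
    and lim: "(\<lambda>k. grad f (s k)) \<longlonglongrightarrow> y"
  shows "y \<in> frontier (subgrad_set K f q)"
proof -
  have "y \<notin> interior (subgrad_set K f q)"
  proof
    assume "y \<in> interior (subgrad_set K f q)"
    then obtain e where "e > 0" and ball: "cball y e \<subseteq> subgrad_set K f q"
      by (meson mem_interior_cball)
    obtain k where "dist (grad f (s k)) y < e"
      using lim \<open>e > 0\<close> by (meson LIMSEQ_iff_nz dist_norm order_refl)
    moreover have "e \<le> norm (grad f (s k) - y)"
      using cball_subset_subgrad_set_imp_norm_grad_diff_ge[OF convex ball _ \<open>q \<in> K\<close>] \<open>e > 0\<close> s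
      by simp
    ultimately show False
      by (simp add: dist_norm)
  qed
  moreover have "y \<in> subgrad_set K f q"
    using tendsto_grad_in_subgrad_set[OF convex cont \<open>q \<in> K\<close> s(1,3,4) lim] .
  ultimately show ?thesis
    unfolding frontier_def using closure_subset by blast
qed

lemma convergent_subseq_unless_norm_tendsto_at_top:
  fixes x :: "nat \<Rightarrow> 'a::{heine_borel, real_normed_vector}"
  assumes "\<not> filterlim (\<lambda>k. norm (x k)) at_top sequentially"
  obtains r l where "strict_mono r" "(x \<circ> r) \<longlonglongrightarrow> l"
proof -
  obtain Z where "\<not> eventually (\<lambda>k. Z \<le> norm (x k)) sequentially"
    using assms unfolding filterlim_at_top by blast
  hence "infinite {k. norm (x k) < Z}"
    unfolding cofinite_eq_sequentially[symmetric] frequently_cofinite[symmetric] frequently_def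
    by (simp add: not_less)
  then obtain r1 :: "nat \<Rightarrow> nat" where r1: "strict_mono r1" "\<forall>k. r1 k \<in> {k. norm (x k) < Z}"
    using infinite_enumerate by blast
  hence "\<forall>k. norm ((x \<circ> r1) k) \<le> Z"
    by (simp add: less_imp_le)
  hence "bounded (range (x \<circ> r1))"
    unfolding bounded_iff by blast
  then obtain l r2 where "strict_mono r2" "(x \<circ> r1 \<circ> r2) \<longlonglongrightarrow> l"
    using bounded_imp_convergent_subsequence by blast
  moreover have "strict_mono (r1 \<circ> r2)"
    using r1(1) \<open>strict_mono r2\<close> by (rule strict_mono_o)
  ultimately show ?thesis
    using that[of "r1 \<circ> r2" l] by (simp add: comp_assoc)
qed

theorem mainTheorem8:
  fixes n :: nat and p :: "nat \<Rightarrow> real^2" and A :: real and b :: "nat \<Rightarrow> real"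
    and \<phi> :: "real^2 \<Rightarrow> real" and U :: "(real^2) set"
  assumes poly: "ccw_convex_polygon n p"
    and U_def: "U = polygon_interior n p"
    and A_nonneg: "A \<ge> 0"
    and cont: "continuous_on (closure U) \<phi>"
    and conv: "convex_on (closure U) \<phi>"
    and smooth: "smooth_on U \<phi>"
    and MA: "\<forall>u\<in>U. det (hessian \<phi> u) = potential A n p u"
    and vals: "\<forall>i<n. \<phi> (p i) = b i"
    and edges: "\<forall>i<n. \<forall>t\<in>{0..1::real}.
        \<phi> ((1 - t) *\<^sub>R p i + t *\<^sub>R p ((i + 1) mod n))
          = (1 - t) * \<phi> (p i) + t * \<phi> (p ((i + 1) mod n))"
    and i: "i < n"
    and seq_in: "\<forall>k. s k \<in> U"
    and seq_lim: "s \<longlonglongrightarrow> p i"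
  shows "\<exists>r::nat \<Rightarrow> nat. strict_mono r \<and>
           (filterlim (\<lambda>k. norm (grad \<phi> (s (r k)))) at_top sequentially \<or>
            (\<exists>y \<in> frontier (subgrad_set (closure U) \<phi> (p i)).
               (\<lambda>k. grad \<phi> (s (r k))) \<longlonglongrightarrow> y))"
proof (cases "filterlim (\<lambda>k. norm (grad \<phi> (s k))) at_top sequentially")
  case True
  thus ?thesis
    using strict_mono_id by (intro exI[of _ id]) simp
next
  case False
  then obtain r y where r: "strict_mono r" and lim: "(\<lambda>k. grad \<phi> (s (r k))) \<longlonglongrightarrow> y"
    using convergent_subseq_unless_norm_tendsto_at_top[of "\<lambda>k. grad \<phi> (s k)"]
    by (auto simp: o_def)
  have "\<phi> differentiable (at u)" if "u \<in> U" for u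
    using smooth that unfolding smooth_on_def by (metis iter_partial.simps(1))
  moreover have "s k \<noteq> p i" for k
    using seq_in vertex_notin_polygon_interior[OF poly i] U_def by metis
  moreover have "(\<lambda>k. s (r k)) \<longlonglongrightarrow> p i"
    using LIMSEQ_subseq_LIMSEQ[OF seq_lim r] by (simp add: o_def)
  moreover have "p i \<in> closure U"
    using seq_in seq_lim by (meson closure_sequential)
  moreover have "s k \<in> closure U" for k
    using seq_in closure_subset by blast
  ultimately have "y \<in> frontier (subgrad_set (closure U) \<phi> (p i))"
    using seq_in by (intro tendsto_grad_in_frontier_subgrad_set[OF conv cont _ _ _ _ _ lim]) auto
  thus ?thesis
    using r lim by blast
qed

end
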